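(* Let $\mathbb{K}\subseteq\mathcal{K}\subseteq\mathcal{A}$ be field extensions such that $\mathcal{K}\subseteq\mathcal{A}$ is finite, separable and normal with Galois group $G$. Assume $G=NH$, where $H$ and $N$ are subgroups with $N\cap H=\{1\}$ and $N$ is generated by an element $\sigma$ central in $G$. Set $\mathcal{B}=\mathcal{A}^H$. Then $\mathcal{B}[X,\sigma,0]\subseteq\mathcal{A}[X,\sigma,0]$ is a centrally $(\mathbb{K}H)^*$-Galois extension.
   Context: $(\mathbb{K}H)^*$ is the dual Hopf algebra of the group algebra $\mathbb{K}H$, with $\{p_x\}_{x\in H}$ the dual basis; $\mathcal{A}$ is a $(\mathbb{K}H)^*$-comodule algebra via $\rho(a)=\sum_{x\in H}x(a)\otimes p_x$, with coinvariants $\mathcal{A}^H=\mathcal{B}$. The Ore extension $\mathcal{A}[X,\sigma,0]$ is the free left $\mathcal{A}$-module on $1,X,X^2,\dots$ with $X^nX^m=X^{n+m}$ and $Xa=\sigma(a)X$; $\mathcal{B}[X,\sigma,0]$ is its subalgebra (as $\sigma$ commutes with $H$). It is a comodule algebra via $\rho(aX^n)=\sum_x x(a)X^n\otimes p_x$, with coinvariants $\mathcal{B}[X,\sigma,0]$. For a comodule algebra $\mathcal{C}$ over a commutative Hopf algebra $\mathcal{H}$, an extension of coinvariants $\mathcal{C}'\subseteq\mathcal{C}$ is $\mathcal{H}$-Galois if $\mathcal{C}\otimes_{\mathcal{C}'}\mathcal{C}\to\mathcal{C}\otimes\mathcal{H}$, $c\otimes x\mapsto\sum cx_{\langle0\rangle}\otimes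 x_{\langle1\rangle}$, is bijective; $\mathcal{C}'\subseteq\mathcal{C}$ is centrally $\mathcal{H}$-Galois if the center $Z(\mathcal{C})$ is a subcomodule and $Z(\mathcal{C})^{\mathrm{co}\mathcal{H}}\subseteq Z(\mathcal{C})$ is $\mathcal{H}$-Galois with $Z(\mathcal{C})$ faithfully flat over $Z(\mathcal{C})^{\mathrm{co}\mathcal{H}}$. *)

theory Defs
  imports "HOL-Computational_Algebra.Polynomial" "HOL-Library.Poly_Mapping"
begin

section \<open>Field-theoretic notions (inside an ambient field type 'a, which plays the role of A)\<close>

definition subfield :: "'a::field set \<Rightarrow> bool" where
  "subfield S \<longleftrightarrow> 0 \<in> S \<and> 1 \<in> S \<and> (\<forall>x\<in>S. \<forall>y\<in>S. x + y \<in> S \<and> x * y \<in> S)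
      \<and> (\<forall>x\<in>S. - x \<in> S \<and> inverse x \<in> S)"

definition finite_ext :: "'a::field set \<Rightarrow> bool" where
  "finite_ext Kc \<longleftrightarrow> (\<exists>Bs. finite Bs \<and>
      (\<forall>a. \<exists>c. (\<forall>b\<in>Bs. c b \<in> Kc) \<and> a = (\<Sum>b\<in>Bs. c b * b)))"

definition poly_over :: "'a::field set \<Rightarrow> 'a poly \<Rightarrow> bool" where
  "poly_over Kc p \<longleftrightarrow> (\<forall>n. coeff p n \<in> Kc)"

definition is_minpoly :: "'a::field set \<Rightarrow> 'a \<Rightarrow> 'a poly \<Rightarrow> bool" where
  "is_minpoly Kc a p \<longleftrightarrow> lead_coeff p = 1 \<and> poly_over Kc p \<and> poly p a = 0 \<and>
      (\<forall>q. q \<noteq> 0 \<and> poly_over Kc q \<and> poly q a = 0 \<longrightarrow> degree p \<le> degree q)"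

definition separable_ext :: "'a::field set \<Rightarrow> bool" where
  "separable_ext Kc \<longleftrightarrow> (\<forall>a p. is_minpoly Kc a p \<longrightarrow> coprime p (pderiv p))"

definition normal_ext :: "'a::field set \<Rightarrow> bool" where
  "normal_ext Kc \<longleftrightarrow> (\<forall>a p. is_minpoly Kc a p \<longrightarrow> (\<exists>rs. p = (\<Prod>r\<leftarrow>rs. [:- r, 1:])))"

definition field_aut :: "('a::field \<Rightarrow> 'a) \<Rightarrow> bool" where
  "field_aut g \<longleftrightarrow> bij g \<and> (\<forall>x y. g (x + y) = g x + g y) \<and> (\<forall>x y. g (x * y) = g x * g y)"

definition galois_group :: "'a::field set \<Rightarrow> ('a \<Rightarrow> 'a) set" where
  "galois_group Kc = {g. field_aut g \<and> (\<forall>k\<in>Kc. g k = k)}"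

definition subgrp :: "('a \<Rightarrow> 'a) set \<Rightarrow> ('a \<Rightarrow> 'a) set \<Rightarrow> bool" where
  "subgrp H G \<longleftrightarrow> H \<subseteq> G \<and> id \<in> H \<and> (\<forall>g\<in>H. \<forall>h\<in>H. g \<circ> h \<in> H) \<and> (\<forall>h\<in>H. inv h \<in> H)"

definition cyclic_gen :: "('a \<Rightarrow> 'a) \<Rightarrow> ('a \<Rightarrow> 'a) set" where
  "cyclic_gen s = range (\<lambda>n. s ^^ n) \<union> range (\<lambda>n. inv s ^^ n)"

definition fixed_field :: "('a \<Rightarrow> 'a) set \<Rightarrow> 'a set" where
  "fixed_field H = {a. \<forall>h\<in>H. h a = a}"

text \<open>Elements are represented by 'a poly (coefficients on the left: sum a_i X^i);
  multiplication is twisted: (a X^i)(b X^j) = a s^i(b) X^(i+j).\<close>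
definition ore_mult :: "('a::comm_ring_1 \<Rightarrow> 'a) \<Rightarrow> 'a poly \<Rightarrow> 'a poly \<Rightarrow> 'a poly" where
  "ore_mult s p q = (\<Sum>i\<le>degree p. \<Sum>j\<le>degree q. monom (coeff p i * (s ^^ i) (coeff q j)) (i + j))"

definition ore_sub :: "'a::zero set \<Rightarrow> 'a poly set" where
  "ore_sub B = {p. \<forall>n. coeff p n \<in> B}"

text \<open>Action of H on A[X,s,0] coefficientwise: the (K H)^*-coaction
  rho(a X^n) = sum_x x(a) X^n \<otimes> p_x, written as the family of maps (x acting).\<close>
definition ore_act :: "('a::zero \<Rightarrow> 'a) \<Rightarrow> 'a poly \<Rightarrow> 'a poly" where
  "ore_act h p = map_poly h p"

text \<open>Relations defining L \<otimes>_R M as a quotient of the free abelian group on L \<times> M.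
  ract: right action of R on the left factor; mul: multiplication (left action on right factor).\<close>
inductive_set tensor_rel :: "'l::ab_group_add set \<Rightarrow> ('l \<Rightarrow> 'c \<Rightarrow> 'l) \<Rightarrow> 'c::ab_group_add set
    \<Rightarrow> 'c set \<Rightarrow> ('c \<Rightarrow> 'c \<Rightarrow> 'c) \<Rightarrow> ('l \<times> 'c \<Rightarrow>\<^sub>0 int) set"
  for Lc ract Mc R mul where
  zero: "0 \<in> tensor_rel Lc ract Mc R mul"
| addl: "m \<in> Lc \<Longrightarrow> m' \<in> Lc \<Longrightarrow> z \<in> Mc \<Longrightarrow>
     Poly_Mapping.single (m + m', z) 1 - Poly_Mapping.single (m, z) 1 - Poly_Mapping.single (m', z) 1
       \<in> tensor_rel Lc ract Mc R mul"
| addr: "m \<in> Lc \<Longrightarrow> z \<in> Mc \<Longrightarrow> z' \<in> Mc \<Longrightarrow>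
     Poly_Mapping.single (m, z + z') 1 - Poly_Mapping.single (m, z) 1 - Poly_Mapping.single (m, z') 1
       \<in> tensor_rel Lc ract Mc R mul"
| bal: "m \<in> Lc \<Longrightarrow> r \<in> R \<Longrightarrow> z \<in> Mc \<Longrightarrow>
     Poly_Mapping.single (ract m r, z) 1 - Poly_Mapping.single (m, mul r z) 1
       \<in> tensor_rel Lc ract Mc R mul"
| plus: "s \<in> tensor_rel Lc ract Mc R mul \<Longrightarrow> t \<in> tensor_rel Lc ract Mc R mul \<Longrightarrow>
     s + t \<in> tensor_rel Lc ract Mc R mul"
| uminus: "s \<in> tensor_rel Lc ract Mc R mul \<Longrightarrow> - s \<in> tensor_rel Lc ract Mc R mul"

text \<open>R-module structure on a whole type 'm (R commutative, so left = right modules).\<close>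
definition rmodule :: "'c::ring_1 set \<Rightarrow> ('c \<Rightarrow> 'c \<Rightarrow> 'c) \<Rightarrow> ('c \<Rightarrow> 'm::ab_group_add \<Rightarrow> 'm) \<Rightarrow> bool" where
  "rmodule R mul sm \<longleftrightarrow>
     (\<forall>r\<in>R. \<forall>m n. sm r (m + n) = sm r m + sm r n) \<and>
     (\<forall>r\<in>R. \<forall>s\<in>R. \<forall>m. sm (r + s) m = sm r m + sm s m) \<and>
     (\<forall>r\<in>R. \<forall>s\<in>R. \<forall>m. sm (mul r s) m = sm r (sm s m)) \<and>
     (\<forall>m. sm 1 m = m)"

definition rlinear :: "'c set \<Rightarrow> ('c \<Rightarrow> 'm::ab_group_add \<Rightarrow> 'm) \<Rightarrow> ('c \<Rightarrow> 'n::ab_group_add \<Rightarrow> 'n)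
    \<Rightarrow> ('m \<Rightarrow> 'n) \<Rightarrow> bool" where
  "rlinear R sm sn f \<longleftrightarrow> (\<forall>m m'. f (m + m') = f m + f m') \<and> (\<forall>r\<in>R. \<forall>m. f (sm r m) = sn r (f m))"

text \<open>f \<otimes> id on formal sums.\<close>
definition tmap :: "('m \<Rightarrow> 'n) \<Rightarrow> ('m \<times> 'c \<Rightarrow>\<^sub>0 int) \<Rightarrow> ('n \<times> 'c \<Rightarrow>\<^sub>0 int)" where
  "tmap f s = (\<Sum>p\<in>Poly_Mapping.keys s. Poly_Mapping.single (f (fst p), snd p) (Poly_Mapping.lookup s p))"

text \<open>Z is flat over R (R \<subseteq> Z, both with multiplication mul): - \<otimes>_R Z preserves injections.\<close>
definition flat_over :: "'c::ring_1 set \<Rightarrow> 'c set \<Rightarrow> ('c \<Rightarrow> 'c \<Rightarrow> 'c)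
    \<Rightarrow> 'm::ab_group_add itself \<Rightarrow> 'n::ab_group_add itself \<Rightarrow> bool" where
  "flat_over R Z mul TM TN \<longleftrightarrow>
     (\<forall>(sm :: 'c \<Rightarrow> 'm \<Rightarrow> 'm) (sn :: 'c \<Rightarrow> 'n \<Rightarrow> 'n) f.
        rmodule R mul sm \<and> rmodule R mul sn \<and> rlinear R sm sn f \<and> inj f \<longrightarrow>
        (\<forall>s. Poly_Mapping.keys s \<subseteq> UNIV \<times> Z \<and> tmap f s \<in> tensor_rel UNIV (\<lambda>n r. sn r n) Z R mul
              \<longrightarrow> s \<in> tensor_rel UNIV (\<lambda>m r. sm r m) Z R mul))"

text \<open>Faithfully flat: flat, and M \<otimes>_R Z = 0 implies M = 0.\<close>
definition faithfully_flat_over :: "'c::ring_1 set \<Rightarrow> 'c set \<Rightarrow> ('c \<Rightarrow> 'c \<Rightarrow> 'c)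
    \<Rightarrow> 'm::ab_group_add itself \<Rightarrow> 'n::ab_group_add itself \<Rightarrow> bool" where
  "faithfully_flat_over R Z mul TM TN \<longleftrightarrow> flat_over R Z mul TM TN \<and>
     (\<forall>sm :: 'c \<Rightarrow> 'm \<Rightarrow> 'm. rmodule R mul sm \<and>
        (\<forall>m z. z \<in> Z \<longrightarrow> Poly_Mapping.single (m, z) 1 \<in> tensor_rel UNIV (\<lambda>m r. sm r m) Z R mul)
        \<longrightarrow> (\<forall>m::'m. m = 0))"

text \<open>A (K H)^*-coaction rho(c) = sum_x x(c) \<otimes> p_x is encoded by the action act of H.
  C \<otimes> (K H)^* is identified with functions H \<rightarrow> C (sum_x c_x \<otimes> p_x \<mapsto> (x \<mapsto> c_x)).\<close>

definition coinv :: "'c set \<Rightarrow> ('h \<Rightarrow> 'c \<Rightarrow> 'c) \<Rightarrow> 'h set \<Rightarrow> 'c set" where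
  "coinv C act H = {c \<in> C. \<forall>h\<in>H. act h c = c}"

definition ring_center :: "'c set \<Rightarrow> ('c \<Rightarrow> 'c \<Rightarrow> 'c) \<Rightarrow> 'c set" where
  "ring_center C mul = {z \<in> C. \<forall>c\<in>C. mul z c = mul c z}"

definition subcomodule :: "'c set \<Rightarrow> ('h \<Rightarrow> 'c \<Rightarrow> 'c) \<Rightarrow> 'h set \<Rightarrow> bool" where
  "subcomodule S act H \<longleftrightarrow> (\<forall>z\<in>S. \<forall>h\<in>H. act h z \<in> S)"

text \<open>Canonical map C \<otimes>_{C'} C \<rightarrow> C \<otimes> (K H)^*, c \<otimes> x \<mapsto> sum_h c h(x) \<otimes> p_h, on formal sums.\<close>
definition galois_map :: "('c::ring_1 \<Rightarrow> 'c \<Rightarrow> 'c) \<Rightarrow> ('h \<Rightarrow> 'c \<Rightarrow> 'c)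
    \<Rightarrow> ('c \<times> 'c \<Rightarrow>\<^sub>0 int) \<Rightarrow> 'h \<Rightarrow> 'c" where
  "galois_map mul act s h = (\<Sum>p\<in>Poly_Mapping.keys s. of_int (Poly_Mapping.lookup s p) * mul (fst p) (act h (snd p)))"

definition hopf_galois :: "'c::ring_1 set \<Rightarrow> 'c set \<Rightarrow> ('c \<Rightarrow> 'c \<Rightarrow> 'c) \<Rightarrow> ('h \<Rightarrow> 'c \<Rightarrow> 'c)
    \<Rightarrow> 'h set \<Rightarrow> bool" where
  "hopf_galois C' C mul act H \<longleftrightarrow> C' = coinv C act H \<and>
     (\<forall>f. (\<forall>h\<in>H. f h \<in> C) \<longrightarrow>
        (\<exists>s. Poly_Mapping.keys s \<subseteq> C \<times> C \<and> (\<forall>h\<in>H. galois_map mul act s h = f h))) \<and>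
     (\<forall>s. Poly_Mapping.keys s \<subseteq> C \<times> C \<and> (\<forall>h\<in>H. galois_map mul act s h = 0) \<longrightarrow>
        s \<in> tensor_rel C (\<lambda>c r. mul c r) C C' mul)"

definition centrally_galois :: "'c::ring_1 set \<Rightarrow> 'c set \<Rightarrow> ('c \<Rightarrow> 'c \<Rightarrow> 'c) \<Rightarrow> ('h \<Rightarrow> 'c \<Rightarrow> 'c)
    \<Rightarrow> 'h set \<Rightarrow> 'm::ab_group_add itself \<Rightarrow> 'n::ab_group_add itself \<Rightarrow> bool" where
  "centrally_galois C' C mul act H TM TN \<longleftrightarrow>
     C' = coinv C act H \<and>
     subcomodule (ring_center C mul) act H \<and>
     hopf_galois (coinv (ring_center C mul) act H) (ring_center C mul) mul act H \<and>
     faithfully_flat_over (coinv (ring_center C mul) act H) (ring_center C mul) mul TM TN"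

end

theory Submission
  imports Defs "HOL-Library.Function_Algebras"
begin

text \<open>The constants \<open>[:c:]\<close> with \<open>\<sigma> c = c\<close> are central in \<open>A[X, \<sigma>, 0]\<close>, and \<open>H\<close> acts on the
  center \<open>Z\<close> by ring automorphisms, with invariants \<open>R\<close>. Because \<open>N = \<langle>\<sigma>\<rangle>\<close> meets \<open>H\<close> trivially,
  Dedekind's lemma applied to the cosets \<open>gN\<close>, \<open>hN\<close> shows that \<open>H\<close> acts faithfully on the fixed
  field of \<open>\<sigma>\<close>; by Artin's argument this field therefore carries a Galois basis
  \<open>x\<^sub>i, y\<^sub>i\<close> with \<open>\<Sum>\<^sub>i x\<^sub>i u(y\<^sub>i) = \<delta>\<^sub>u\<^sub>,\<^sub>1\<close> for \<open>u \<in> H\<close>. With \<open>trace z = \<Sum>\<^sub>h h(z)\<close> every central \<open>z\<close>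
  decomposes as \<open>z = \<Sum>\<^sub>i x\<^sub>i trace (y\<^sub>i z)\<close> with coordinates in \<open>R\<close>. These coordinates detect
  tensors over \<open>R\<close>, which gives injectivity of the Galois map and flatness; surjectivity of the
  Galois map comes from the dual basis, and an element of trace one gives faithfulness.\<close>

section \<open>Field automorphisms\<close>

lemma sum_fun_apply: "(sum f A) x = (\<Sum>i\<in>A. f i x)"
  by (induction A rule: infinite_finite_induct) auto

lemma field_aut_id: "field_aut id"
  by (simp add: field_aut_def)

lemma field_aut_comp: "field_aut f \<Longrightarrow> field_aut g \<Longrightarrow> field_aut (f \<circ> g)"
  by (auto simp: field_aut_def bij_comp)

lemma field_aut_funpow: "field_aut s \<Longrightarrow> field_aut (s ^^ n)"
  by (induction n) (auto simp: field_aut_id field_aut_comp)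

context
  fixes g :: "'a::field \<Rightarrow> 'a"
  assumes g: "field_aut g"
begin

lemma field_aut_add: "g (x + y) = g x + g y"
  and field_aut_mult: "g (x * y) = g x * g y"
  and field_aut_bij: "bij g"
  using g by (auto simp: field_aut_def)

lemma field_aut_inj: "inj g"
  and field_aut_surj: "surj g"
  using field_aut_bij by (auto simp: bij_def)

lemma field_aut_0: "g 0 = 0"
  using field_aut_add[of 0 0] by (metis add.right_neutral add_left_cancel)

lemma field_aut_1: "g 1 = 1"
proof -
  obtain u where "g u = 1" using field_aut_surj by (metis surjD)
  then show ?thesis using field_aut_mult[of 1 u] by simp
qed

lemma field_aut_minus: "g (- x) = - g x"
  using field_aut_add[of x "- x"] by (simp add: field_aut_0 eq_neg_iff_add_eq_0 add.commute)

lemma field_aut_diff: "g (x - y) = g x - g y"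
  using field_aut_add[of x "- y"] by (simp add: field_aut_minus)

lemma field_aut_inverse: "g (inverse x) = inverse (g x)"
proof (cases "x = 0")
  case False
  then have "g x * g (inverse x) = 1" by (simp flip: field_aut_mult add: field_aut_1)
  then show ?thesis by (metis inverse_unique)
qed (simp add: field_aut_0)

lemma field_aut_sum: "g (sum f A) = (\<Sum>i\<in>A. g (f i))"
  by (induction A rule: infinite_finite_induct) (auto simp: field_aut_0 field_aut_add)

end

lemma funpow_commute_apply: "h \<circ> s = s \<circ> h \<Longrightarrow> h ((s ^^ i) x) = (s ^^ i) (h x)"
  by (induction i arbitrary: x) (simp_all add: fun_eq_iff)

lemma funpow_fixed: "s c = c \<Longrightarrow> (s ^^ i) c = c"
  by (induction i) auto

lemma sum_comp_left_image:
  assumes "inj g"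
  shows "(\<Sum>\<chi>\<in>(\<lambda>n. g \<circ> n) ` N. \<chi> z) = (\<Sum>n\<in>N. g (n z))"
proof -
  have "inj_on (\<lambda>n. g \<circ> n) N"
    using assms by (auto intro!: inj_onI simp: fun_eq_iff inj_eq)
  then show ?thesis by (simp add: sum.reindex)
qed

lemma characters_independent:
  fixes S :: "('a::field \<Rightarrow> 'a) set"
  assumes "finite S" "\<forall>\<chi>\<in>S. \<forall>x y. \<chi> (x * y) = \<chi> x * \<chi> y" "\<forall>\<chi>\<in>S. \<chi> 1 = 1"
    and "\<forall>z. (\<Sum>\<chi>\<in>S. c \<chi> * \<chi> z) = 0"
  shows "\<forall>\<chi>\<in>S. c \<chi> = 0"
  using assms
proof (induction S arbitrary: c rule: finite_induct)
  case empty
  then show ?case by simp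
next
  case (insert \<chi>0 S)
  have mult: "\<forall>\<chi>\<in>S. \<forall>x y. \<chi> (x * y) = \<chi> x * \<chi> y" "\<forall>\<chi>\<in>S. \<chi> 1 = 1"
    and mult0: "\<And>x y. \<chi>0 (x * y) = \<chi>0 x * \<chi>0 y" "\<chi>0 1 = 1"
    using insert.prems by auto
  have rel: "\<And>z. c \<chi>0 * \<chi>0 z + (\<Sum>\<chi>\<in>S. c \<chi> * \<chi> z) = 0"
    using insert.prems(3) insert.hyps by simp
  then have rel': "\<And>z. (\<Sum>\<chi>\<in>S. c \<chi> * \<chi> z) = - (c \<chi>0 * \<chi>0 z)"
    by (simp add: eq_neg_iff_add_eq_0 add.commute)
  have coeffs_S: "\<forall>\<chi>\<in>S. c \<chi> = 0"
  proof
    fix \<chi> assume \<chi>: "\<chi> \<in> S"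
    then have "\<chi> \<noteq> \<chi>0" using insert.hyps by blast
    then obtain y where y: "\<chi> y \<noteq> \<chi>0 y" by blast
    \<comment> \<open>subtracting \<open>\<chi>0 y\<close> times the relation from the relation at \<open>y * z\<close> eliminates \<open>\<chi>0\<close>\<close>
    have "(\<Sum>\<psi>\<in>S. (c \<psi> * (\<psi> y - \<chi>0 y)) * \<psi> z) = 0" for z
    proof -
      have "(\<Sum>\<psi>\<in>S. c \<psi> * \<psi> (y * z)) = (\<Sum>\<psi>\<in>S. c \<psi> * (\<psi> y * \<psi> z))"
        using mult(1) by (intro sum.cong) auto
      then have "(\<Sum>\<psi>\<in>S. (c \<psi> * (\<psi> y - \<chi>0 y)) * \<psi> z)
          = (\<Sum>\<psi>\<in>S. c \<psi> * \<psi> (y * z)) - \<chi>0 y * (\<Sum>\<psi>\<in>S. c \<psi> * \<psi> z)"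
        by (simp add: algebra_simps sum_subtractf sum_distrib_left)
      also have "\<dots> = - (c \<chi>0 * \<chi>0 (y * z)) + \<chi>0 y * (c \<chi>0 * \<chi>0 z)"
        by (simp only: rel') simp
      also have "\<dots> = 0" by (simp add: mult0 algebra_simps)
      finally show ?thesis .
    qed
    with insert.IH[of "\<lambda>\<psi>. c \<psi> * (\<psi> y - \<chi>0 y)", OF mult] \<chi>
    have "c \<chi> * (\<chi> y - \<chi>0 y) = 0" by blast
    then show "c \<chi> = 0" using y by simp
  qed
  then have "c \<chi>0 * \<chi>0 1 = 0" using rel[of 1] by simp
  then show ?case using coeffs_S mult0(2) by simp
qed

lemma galois_group_apply_combination:
  assumes "\<chi> \<in> galois_group Kc" "\<forall>b\<in>Bs. c b \<in> Kc"
  shows "\<chi> (\<Sum>b\<in>Bs. c b * b) = (\<Sum>b\<in>Bs. \<chi> b * c b)"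
proof -
  have \<chi>: "field_aut \<chi>" and fix_Kc: "\<forall>k\<in>Kc. \<chi> k = k" using assms(1) by (auto simp: galois_group_def)
  have "\<chi> (\<Sum>b\<in>Bs. c b * b) = (\<Sum>b\<in>Bs. \<chi> (c b) * \<chi> b)"
    by (simp add: field_aut_sum[OF \<chi>] field_aut_mult[OF \<chi>])
  also have "\<dots> = (\<Sum>b\<in>Bs. \<chi> b * c b)"
    using assms(2) fix_Kc by (intro sum.cong) (auto simp: mult.commute)
  finally show ?thesis .
qed

lemma finite_galois_group:
  fixes Kc :: "'a::field set"
  assumes "finite_ext Kc"
  shows "finite (galois_group Kc)"
proof -
  obtain Bs where "finite Bs" and span: "\<forall>a. \<exists>c. (\<forall>b\<in>Bs. c b \<in> Kc) \<and> a = (\<Sum>b\<in>Bs. c b * b)"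
    using assms unfolding finite_ext_def by blast
  obtain C where C: "\<And>a. (\<forall>b\<in>Bs. C a b \<in> Kc) \<and> a = (\<Sum>b\<in>Bs. C a b * b)"
    using choice[OF span] by blast
  interpret V: vector_space "\<lambda>(c::'a) (f::'a \<Rightarrow> 'a) x. c * f x"
    by unfold_locales (simp_all add: fun_eq_iff algebra_simps)
  define T where "T = (\<lambda>b a. C a b) ` Bs"
  \<comment> \<open>a \<open>Kc\<close>-automorphism is determined by the images of the basis: it lies in the span of the
     coordinate functionals\<close>
  have "galois_group Kc \<subseteq> V.span T"
  proof
    fix \<chi> assume "\<chi> \<in> galois_group Kc"
    have "\<chi> = (\<Sum>b\<in>Bs. (\<lambda>x. \<chi> b * C x b))"
    proof
      fix a
      have "\<chi> a = \<chi> (\<Sum>b\<in>Bs. C a b * b)" using C[of a] by argo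
      also have "\<dots> = (\<Sum>b\<in>Bs. \<chi> b * C a b)"
        using galois_group_apply_combination[OF \<open>\<chi> \<in> galois_group Kc\<close> conjunct1[OF C]] .
      finally show "\<chi> a = (\<Sum>b\<in>Bs. (\<lambda>x. \<chi> b * C x b)) a" by (simp add: sum_fun_apply)
    qed
    also have "\<dots> \<in> V.span T"
    proof (rule V.span_sum)
      fix b assume "b \<in> Bs"
      then have "(\<lambda>a. C a b) \<in> V.span T" unfolding T_def by (blast intro: V.span_base)
      from V.span_scale[OF this, of "\<chi> b"] show "(\<lambda>x. \<chi> b * C x b) \<in> V.span T" by simp
    qed
    finally show "\<chi> \<in> V.span T" .
  qed
  moreover have "V.independent (galois_group Kc)"
    unfolding V.independent_explicit_finite_subsets
  proof (intro allI impI ballI)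
    fix S u v assume S: "S \<subseteq> galois_group Kc" "finite S"
      and rel: "(\<Sum>v\<in>S. (\<lambda>x. u v * v x)) = 0" and "v \<in> S"
    have "\<forall>z. (\<Sum>\<chi>\<in>S. u \<chi> * \<chi> z) = 0"
      using fun_cong[OF rel] by (simp add: sum_fun_apply)
    moreover have "\<forall>\<chi>\<in>S. \<forall>x y. \<chi> (x * y) = \<chi> x * \<chi> y" "\<forall>\<chi>\<in>S. \<chi> 1 = 1"
      using S by (auto simp: galois_group_def field_aut_mult field_aut_1)
    ultimately show "u v = 0" using characters_independent[OF S(2)] \<open>v \<in> S\<close> by blast
  qed
  moreover have "finite T" unfolding T_def using \<open>finite Bs\<close> by simp
  ultimately show ?thesis using V.independent_span_bound by blast
qed

section \<open>The Ore extension\<close>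

lemma coeff_const: "coeff [:c:] i = (if i = 0 then c else 0)"
  by (cases i) auto

context
  fixes s :: "'a::field \<Rightarrow> 'a"
  assumes s: "field_aut s"
begin

lemma funpow_add_hom: "(s ^^ i) (x + y) = (s ^^ i) x + (s ^^ i) y"
  and funpow_mult_hom: "(s ^^ i) (x * y) = (s ^^ i) x * (s ^^ i) y"
  and funpow_zero_hom: "(s ^^ i) 0 = 0"
  using field_aut_add field_aut_mult field_aut_0 field_aut_funpow[OF s] by blast+

lemma coeff_ore_mult: "coeff (ore_mult s p q) n = (\<Sum>i\<le>n. coeff p i * (s ^^ i) (coeff q (n - i)))"
proof -
  define M where "M = n + degree p + degree q"
  define f where "f i j = coeff p i * (s ^^ i) (coeff q j)" for i j
  have f0: "f i j = 0" if "i > degree p \<or> j > degree q" for i j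
    using that by (auto simp: f_def coeff_eq_0 funpow_zero_hom)
  have "coeff (ore_mult s p q) n = (\<Sum>i\<le>degree p. \<Sum>j\<le>degree q. if i + j = n then f i j else 0)"
    unfolding f_def ore_mult_def coeff_sum by (simp add: if_distrib cong: if_cong)
  \<comment> \<open>enlarge both ranges to \<open>{..M}\<close>, where the extra terms vanish\<close>
  also have "\<dots> = (\<Sum>i\<le>degree p. \<Sum>j\<le>M. if i + j = n then f i j else 0)"
    by (intro sum.cong refl sum.mono_neutral_left) (auto simp: M_def f0)
  also have "\<dots> = (\<Sum>i\<le>M. \<Sum>j\<le>M. if i + j = n then f i j else 0)"
    by (rule sum.mono_neutral_left) (auto simp: M_def f0 not_le intro!: sum.neutral)
  also have "\<dots> = (\<Sum>i\<le>M. if i \<le> n then f i (n - i) else 0)"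
  proof (rule sum.cong[OF refl])
    fix i
    have "(\<Sum>j\<le>M. if i + j = n then f i j else 0) = (\<Sum>j\<le>M. if j = n - i \<and> i \<le> n then f i j else 0)"
      by (intro sum.cong) auto
    then show "(\<Sum>j\<le>M. if i + j = n then f i j else 0) = (if i \<le> n then f i (n - i) else 0)"
      by (auto simp: M_def)
  qed
  also have "\<dots> = (\<Sum>i\<le>n. f i (n - i))"
    by (rule sum.mono_neutral_cong_right) (auto simp: M_def)
  finally show ?thesis by (simp add: f_def)
qed

lemma ore_mult_add_left: "ore_mult s (p + q) r = ore_mult s p r + ore_mult s q r"
  by (simp add: poly_eq_iff coeff_ore_mult algebra_simps sum.distrib)

lemma ore_mult_add_right: "ore_mult s p (q + r) = ore_mult s p q + ore_mult s p r"
  by (simp add: poly_eq_iff coeff_ore_mult algebra_simps sum.distrib funpow_add_hom)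

lemma ore_mult_0_left: "ore_mult s 0 q = 0"
  by (simp add: poly_eq_iff coeff_ore_mult)

lemma ore_mult_0_right: "ore_mult s p 0 = 0"
  by (simp add: poly_eq_iff coeff_ore_mult funpow_zero_hom)

lemma ore_mult_sum_right: "ore_mult s q (sum f A) = (\<Sum>i\<in>A. ore_mult s q (f i))"
  by (induction A rule: infinite_finite_induct) (auto simp: ore_mult_add_right ore_mult_0_right)

lemma ore_mult_smult_left: "ore_mult s (smult c p) q = smult c (ore_mult s p q)"
  by (simp add: poly_eq_iff coeff_ore_mult sum_distrib_left algebra_simps)

lemma ore_mult_smult_right: "s c = c \<Longrightarrow> ore_mult s p (smult c q) = smult c (ore_mult s p q)"
  by (simp add: poly_eq_iff coeff_ore_mult sum_distrib_left algebra_simps funpow_mult_hom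
      funpow_fixed)

lemma ore_mult_const_left: "ore_mult s [:c:] p = smult c p"
proof -
  have "coeff (ore_mult s [:c:] p) n = (\<Sum>i\<le>n. if i = 0 then c * coeff p n else 0)" for n
    unfolding coeff_ore_mult by (intro sum.cong) (auto simp: coeff_const)
  then show ?thesis by (simp add: poly_eq_iff)
qed

lemma ore_mult_const_right: "s c = c \<Longrightarrow> ore_mult s p [:c:] = smult c p"
proof -
  assume "s c = c"
  then have "coeff (ore_mult s p [:c:]) n = (\<Sum>i\<le>n. if i = n then coeff p i * c else 0)" for n
    unfolding coeff_ore_mult by (intro sum.cong) (auto simp: coeff_const funpow_fixed funpow_zero_hom)
  then show ?thesis by (simp add: poly_eq_iff mult.commute)
qed

lemma ore_mult_assoc: "ore_mult s (ore_mult s p q) r = ore_mult s p (ore_mult s q r)"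
proof (rule poly_eqI)
  fix n
  define F where "F a b = coeff p a * (s ^^ a) (coeff q b) * (s ^^ (a + b)) (coeff r (n - a - b))"
    for a b
  have "coeff (ore_mult s (ore_mult s p q) r) n = (\<Sum>k\<le>n. \<Sum>a\<le>k. F a (k - a))"
    by (simp add: coeff_ore_mult F_def sum_distrib_right)
  also have "\<dots> = (\<Sum>(a, b)\<in>{(a, b). a + b \<le> n}. F a b)"
    by (rule sum.triangle_reindex_eq[symmetric])
  also have "\<dots> = (\<Sum>(a, b)\<in>Sigma {..n} (\<lambda>a. {..n - a}). F a b)"
    by (intro sum.cong refl) auto
  also have "\<dots> = (\<Sum>a\<le>n. \<Sum>b\<le>n - a. F a b)"
    by (rule sum.Sigma[symmetric]) auto
  also have "\<dots> = coeff (ore_mult s p (ore_mult s q r)) n"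
    by (simp add: coeff_ore_mult F_def field_aut_sum[OF field_aut_funpow[OF s]] funpow_mult_hom
        sum_distrib_left funpow_add algebra_simps diff_diff_left)
  finally show "coeff (ore_mult s (ore_mult s p q) r) n = coeff (ore_mult s p (ore_mult s q r)) n" .
qed

lemma map_poly_ore_mult:
  assumes h: "field_aut h" and "h \<circ> s = s \<circ> h"
  shows "map_poly h (ore_mult s p q) = ore_mult s (map_poly h p) (map_poly h q)"
  by (simp add: poly_eq_iff coeff_ore_mult coeff_map_poly field_aut_0[OF h] field_aut_mult[OF h]
      field_aut_sum[OF h] funpow_commute_apply[OF assms(2)])

end

section \<open>Integer multiples and linear extension of formal sums\<close>

definition int_mult :: "int \<Rightarrow> 'b \<Rightarrow> 'b::ab_group_add" where
  "int_mult k x = (\<Sum>_<nat k. x) - (\<Sum>_<nat (- k). x)"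

lemma sum_const_lessThan_add: "(\<Sum>_<a + b. x) = (\<Sum>_<a. x) + (\<Sum>_<(b::nat). (x::'b::comm_monoid_add))"
  by (induction b) (simp_all add: add.assoc)

lemma int_mult_add: "int_mult (k + l) x = int_mult k x + int_mult l x"
proof -
  have "nat (k + l) + nat (- k) + nat (- l) = nat k + nat l + nat (- (k + l))"
    by linarith
  then have "(\<Sum>_<nat (k + l). x) + (\<Sum>_<nat (- k). x) + (\<Sum>_<nat (- l). x)
      = (\<Sum>_<nat k. x) + (\<Sum>_<nat l. x) + (\<Sum>_<nat (- (k + l)). x)"
    by (metis sum_const_lessThan_add)
  then show ?thesis unfolding int_mult_def by (simp add: algebra_simps)
qed

lemma int_mult_1 [simp]: "int_mult 1 x = x"
  by (simp add: int_mult_def)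

lemma int_mult_eq_of_int_mult: "int_mult k (x::'r::ring_1) = of_int k * x"
proof -
  have "of_int k = (of_nat (nat k) - of_nat (nat (- k)) :: 'r)"
  proof -
    have "k = int (nat k) - int (nat (- k))" by linarith
    then show ?thesis by (metis of_int_diff of_int_of_nat_eq)
  qed
  then show ?thesis by (simp add: int_mult_def left_diff_distrib)
qed

lemma additive_int_mult:
  assumes add: "\<And>a b. f (a + b) = f a + f b"
  shows "f (int_mult k x) = int_mult k (f x)"
proof -
  have f0: "f 0 = 0" using add[of 0 0] by (metis add_cancel_right_right)
  have "f (a - b) = f a - f b" for a b using add[of "a - b" b] by (simp add: algebra_simps)
  moreover have "f (\<Sum>_<n. x) = (\<Sum>_<n. f x)" for n :: nat by (induction n) (simp_all add: f0 add)
  ultimately show ?thesis by (simp add: int_mult_def)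
qed

lemma int_mult_closed:
  assumes "0 \<in> S" "\<And>a b. a \<in> S \<Longrightarrow> b \<in> S \<Longrightarrow> a + b \<in> S" "\<And>a. a \<in> S \<Longrightarrow> - a \<in> S" "x \<in> S"
  shows "int_mult k x \<in> S"
proof -
  have "(\<Sum>_<n. x) \<in> S" for n :: nat by (induction n) (simp_all add: assms)
  then show ?thesis unfolding int_mult_def using assms(2,3) by (metis diff_conv_add_uminus)
qed

definition frag_eval :: "('p \<Rightarrow> 'b::ab_group_add) \<Rightarrow> ('p \<Rightarrow>\<^sub>0 int) \<Rightarrow> 'b" where
  "frag_eval g t = (\<Sum>p\<in>Poly_Mapping.keys t. int_mult (Poly_Mapping.lookup t p) (g p))"

lemma frag_eval_superset:
  assumes "finite U" "Poly_Mapping.keys t \<subseteq> U"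
  shows "frag_eval g t = (\<Sum>p\<in>U. int_mult (Poly_Mapping.lookup t p) (g p))"
  unfolding frag_eval_def using assms by (intro sum.mono_neutral_left) (auto simp: int_mult_def in_keys_iff)

lemma frag_eval_0 [simp]: "frag_eval g 0 = 0"
  by (simp add: frag_eval_def)

lemma frag_eval_single [simp]: "frag_eval g (Poly_Mapping.single p k) = int_mult k (g p)"
  by (subst frag_eval_superset[of "{p}"]) auto

lemma frag_eval_add: "frag_eval g (t + u) = frag_eval g t + frag_eval g u"
proof -
  let ?U = "Poly_Mapping.keys t \<union> Poly_Mapping.keys u"
  have "frag_eval g (t + u) = (\<Sum>p\<in>?U. int_mult (Poly_Mapping.lookup (t + u) p) (g p))"
    by (rule frag_eval_superset) (auto dest: keys_add[THEN subsetD])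
  then show ?thesis by (simp add: frag_eval_superset[of ?U] lookup_add int_mult_add sum.distrib)
qed

lemma frag_eval_minus: "frag_eval g (- t) = - frag_eval g t"
  using frag_eval_add[of g t "- t"] by (simp add: eq_neg_iff_add_eq_0 add.commute)

lemma frag_eval_diff: "frag_eval g (t - u) = frag_eval g t - frag_eval g u"
  using frag_eval_add[of g t "- u"] by (simp add: frag_eval_minus)

lemma frag_eval_sum: "frag_eval g (sum f A) = (\<Sum>i\<in>A. frag_eval g (f i))"
  by (induction A rule: infinite_finite_induct) (auto simp: frag_eval_add)

lemma frag_eval_closed:
  assumes "0 \<in> S" "\<And>a b. a \<in> S \<Longrightarrow> b \<in> S \<Longrightarrow> a + b \<in> S" "\<And>a. a \<in> S \<Longrightarrow> - a \<in> S"
    and "\<And>p. p \<in> Poly_Mapping.keys t \<Longrightarrow> g p \<in> S"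
  shows "frag_eval g t \<in> S"
proof -
  have "F \<subseteq> Poly_Mapping.keys t \<Longrightarrow> (\<Sum>p\<in>F. int_mult (Poly_Mapping.lookup t p) (g p)) \<in> S" for F
    by (induction F rule: infinite_finite_induct) (auto simp: assms int_mult_closed)
  then show ?thesis unfolding frag_eval_def by blast
qed

lemma additive_frag_eval:
  assumes add: "\<And>a b. f (a + b) = f a + f b"
  shows "f (frag_eval g t) = frag_eval (\<lambda>p. f (g p)) t"
proof -
  have f0: "f 0 = 0" using add[of 0 0] by (metis add_cancel_right_right)
  have "f (sum h A) = (\<Sum>i\<in>A. f (h i))" for h and A :: "'c set"
    by (induction A rule: infinite_finite_induct) (simp_all add: f0 add)
  then show ?thesis by (simp add: frag_eval_def additive_int_mult[OF add])
qed

section \<open>Tensor relations\<close>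

lemma keys_sum_subset:
  "(\<And>i. i \<in> A \<Longrightarrow> Poly_Mapping.keys (f i) \<subseteq> S) \<Longrightarrow> Poly_Mapping.keys (sum f A) \<subseteq> S"
  using keys_sum[of f A] by blast

lemma tensor_rel_diff:
  "a \<in> tensor_rel Lc ract Mc R mul \<Longrightarrow> b \<in> tensor_rel Lc ract Mc R mul \<Longrightarrow>
    a - b \<in> tensor_rel Lc ract Mc R mul"
  using tensor_rel.plus[of a Lc ract Mc R mul "- b"] tensor_rel.uminus by fastforce

lemma tensor_rel_sum:
  "(\<And>i. i \<in> A \<Longrightarrow> f i \<in> tensor_rel Lc ract Mc R mul) \<Longrightarrow> sum f A \<in> tensor_rel Lc ract Mc R mul"
  by (induction A rule: infinite_finite_induct) (auto intro: tensor_rel.zero tensor_rel.plus)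

lemma tensor_rel_zero_left: "0 \<in> Lc \<Longrightarrow> z \<in> Mc \<Longrightarrow> frag_of (0, z) \<in> tensor_rel Lc ract Mc R mul"
  using tensor_rel.uminus[OF tensor_rel.addl[of 0 Lc 0 z Mc ract R mul]] by simp

lemma tensor_rel_zero_right: "m \<in> Lc \<Longrightarrow> 0 \<in> Mc \<Longrightarrow> frag_of (m, 0) \<in> tensor_rel Lc ract Mc R mul"
  using tensor_rel.uminus[OF tensor_rel.addr[of m Lc 0 Mc 0 ract R mul]] by simp

lemma tensor_rel_sum_right:
  assumes "m \<in> Lc" "0 \<in> Mc" "\<And>a b. a \<in> Mc \<Longrightarrow> b \<in> Mc \<Longrightarrow> a + b \<in> Mc" "finite J"
    and "\<And>j. j \<in> J \<Longrightarrow> w j \<in> Mc"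
  shows "frag_of (m, sum w J) - (\<Sum>j\<in>J. frag_of (m, w j)) \<in> tensor_rel Lc ract Mc R mul"
  using assms(4,5)
proof (induction J rule: finite_induct)
  case empty
  then show ?case using tensor_rel_zero_right[OF assms(1,2)] by simp
next
  case (insert j J)
  have "sum w J \<in> Mc"
    using insert.prems by (induction J rule: infinite_finite_induct) (auto simp: assms(2) intro!: assms(3))
  then have "frag_of (m, w j + sum w J) - frag_of (m, w j) - frag_of (m, sum w J)
      \<in> tensor_rel Lc ract Mc R mul"
    using insert.prems by (intro tensor_rel.addr assms(1)) auto
  from tensor_rel.plus[OF this insert.IH] insert.prems insert.hyps show ?case
    by (simp add: algebra_simps)
qed

lemma frag_eval_tensor_rel:
  assumes "t \<in> tensor_rel Lc ract Mc R mul"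
    and "\<And>m m' z. m \<in> Lc \<Longrightarrow> m' \<in> Lc \<Longrightarrow> z \<in> Mc \<Longrightarrow> g (m + m', z) = g (m, z) + g (m', z)"
    and "\<And>m z z'. m \<in> Lc \<Longrightarrow> z \<in> Mc \<Longrightarrow> z' \<in> Mc \<Longrightarrow> g (m, z + z') = g (m, z) + g (m, z')"
    and "\<And>m r z. m \<in> Lc \<Longrightarrow> r \<in> R \<Longrightarrow> z \<in> Mc \<Longrightarrow> g (ract m r, z) = g (m, mul r z)"
  shows "frag_eval g t = 0"
  using assms(1)
  by induction (simp_all add: frag_eval_add frag_eval_minus frag_eval_diff assms(2-4))

lemma tensor_rel_decompose_generator:
  fixes n :: nat
  assumes M0: "0 \<in> Mc" and Madd: "\<And>a b. a \<in> Mc \<Longrightarrow> b \<in> Mc \<Longrightarrow> a + b \<in> Mc"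
    and X: "\<And>j. j < n \<Longrightarrow> X j \<in> Mc"
    and mu: "\<And>j z. j < n \<Longrightarrow> z \<in> Mc \<Longrightarrow> \<mu> j z \<in> R"
    and Mmul: "\<And>j z. j < n \<Longrightarrow> z \<in> Mc \<Longrightarrow> mul (\<mu> j z) (X j) \<in> Mc"
    and decomp: "\<And>z. z \<in> Mc \<Longrightarrow> z = (\<Sum>j<n. mul (\<mu> j z) (X j))"
    and m: "m \<in> Lc" and z: "z \<in> Mc"
  shows "frag_of (m, z) - (\<Sum>j<n. frag_of (ract m (\<mu> j z), X j)) \<in> tensor_rel Lc ract Mc R mul"
proof -
  let ?T = "tensor_rel Lc ract Mc R mul"
  have "frag_of (m, \<Sum>j<n. mul (\<mu> j z) (X j)) - (\<Sum>j<n. frag_of (m, mul (\<mu> j z) (X j))) \<in> ?T"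
    by (rule tensor_rel_sum_right[OF m M0 Madd]) (auto simp: Mmul z)
  moreover have "(\<Sum>j<n. frag_of (m, mul (\<mu> j z) (X j)) - frag_of (ract m (\<mu> j z), X j)) \<in> ?T"
  proof (rule tensor_rel_sum)
    fix j assume "j \<in> {..<n}"
    then have "j < n" by simp
    from tensor_rel.bal[OF m mu[OF this z] X[OF this], of ract mul]
    show "frag_of (m, mul (\<mu> j z) (X j)) - frag_of (ract m (\<mu> j z), X j) \<in> ?T"
      using tensor_rel.uminus by fastforce
  qed
  ultimately have "(frag_of (m, \<Sum>j<n. mul (\<mu> j z) (X j)) - (\<Sum>j<n. frag_of (m, mul (\<mu> j z) (X j))))
      + (\<Sum>j<n. frag_of (m, mul (\<mu> j z) (X j)) - frag_of (ract m (\<mu> j z), X j)) \<in> ?T"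
    by (rule tensor_rel.plus)
  then show ?thesis using decomp[OF z] by (simp add: sum_subtractf)
qed

lemma tensor_rel_decompose:
  fixes Lc :: "'l::ab_group_add set" and Mc R :: "'c::ab_group_add set" and n :: nat
  assumes L0: "0 \<in> Lc" and Ladd: "\<And>a b. a \<in> Lc \<Longrightarrow> b \<in> Lc \<Longrightarrow> a + b \<in> Lc"
    and Lminus: "\<And>a. a \<in> Lc \<Longrightarrow> - a \<in> Lc"
    and Lract: "\<And>m r. m \<in> Lc \<Longrightarrow> r \<in> R \<Longrightarrow> ract m r \<in> Lc"
    and M0: "0 \<in> Mc" and Madd: "\<And>a b. a \<in> Mc \<Longrightarrow> b \<in> Mc \<Longrightarrow> a + b \<in> Mc"
    and X: "\<And>j. j < n \<Longrightarrow> X j \<in> Mc"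
    and mu: "\<And>j z. j < n \<Longrightarrow> z \<in> Mc \<Longrightarrow> \<mu> j z \<in> R"
    and Mmul: "\<And>j z. j < n \<Longrightarrow> z \<in> Mc \<Longrightarrow> mul (\<mu> j z) (X j) \<in> Mc"
    and decomp: "\<And>z. z \<in> Mc \<Longrightarrow> z = (\<Sum>j<n. mul (\<mu> j z) (X j))"
    and keys: "Poly_Mapping.keys t \<subseteq> Lc \<times> Mc"
  shows "t - (\<Sum>j<n. frag_of (frag_eval (\<lambda>p. ract (fst p) (\<mu> j (snd p))) t, X j))
           \<in> tensor_rel Lc ract Mc R mul"
proof -
  define \<Theta> where "\<Theta> j t = frag_eval (\<lambda>p. ract (fst p) (\<mu> j (snd p))) t" for j t
  let ?T = "tensor_rel Lc ract Mc R mul"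
  have \<Theta>_in: "\<Theta> j t \<in> Lc" if "j < n" "Poly_Mapping.keys t \<subseteq> Lc \<times> Mc" for j t
    unfolding \<Theta>_def using that Lract mu by (intro frag_eval_closed[OF L0 Ladd Lminus]) auto
  have "Poly_Mapping.keys t \<subseteq> Lc \<times> Mc \<and> t - (\<Sum>j<n. frag_of (\<Theta> j t, X j)) \<in> ?T"
    using keys
  proof (induction rule: frag_induction)
    case zero
    have "(\<Sum>j<n. frag_of (\<Theta> j 0, X j)) \<in> ?T"
      by (rule tensor_rel_sum) (simp add: \<Theta>_def tensor_rel_zero_left[OF L0] X)
    then show ?case using tensor_rel.uminus by fastforce
  next
    case (one x)
    then obtain m z where "x = (m, z)" "m \<in> Lc" "z \<in> Mc" by auto
    then show ?case
      using tensor_rel_decompose_generator[OF M0 Madd X mu Mmul decomp] by (simp add: \<Theta>_def)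
  next
    case (diff a b)
    have ka: "Poly_Mapping.keys a \<subseteq> Lc \<times> Mc" and kb: "Poly_Mapping.keys b \<subseteq> Lc \<times> Mc"
      using diff by auto
    have "(\<Sum>j<n. frag_of (\<Theta> j a, X j) - frag_of (\<Theta> j a - \<Theta> j b, X j) - frag_of (\<Theta> j b, X j)) \<in> ?T"
    proof (rule tensor_rel_sum)
      fix j assume "j \<in> {..<n}"
      then have j: "j < n" by simp
      have "\<Theta> j a - \<Theta> j b \<in> Lc"
        using \<Theta>_in[OF j ka] \<Theta>_in[OF j kb] Ladd Lminus by (metis diff_conv_add_uminus)
      from tensor_rel.addl[OF this \<Theta>_in[OF j kb] X[OF j], of ract R mul]
      show "frag_of (\<Theta> j a, X j) - frag_of (\<Theta> j a - \<Theta> j b, X j) - frag_of (\<Theta> j b, X j) \<in> ?T"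
        by simp
    qed
    with diff have rel: "((a - (\<Sum>j<n. frag_of (\<Theta> j a, X j))) - (b - (\<Sum>j<n. frag_of (\<Theta> j b, X j))))
        + (\<Sum>j<n. frag_of (\<Theta> j a, X j) - frag_of (\<Theta> j a - \<Theta> j b, X j) - frag_of (\<Theta> j b, X j)) \<in> ?T"
      by (blast intro: tensor_rel_diff tensor_rel.plus)
    have "\<Theta> j (a - b) = \<Theta> j a - \<Theta> j b" for j by (simp add: \<Theta>_def frag_eval_diff)
    then have E: "(a - b) - (\<Sum>j<n. frag_of (\<Theta> j (a - b), X j))
        = ((a - (\<Sum>j<n. frag_of (\<Theta> j a, X j))) - (b - (\<Sum>j<n. frag_of (\<Theta> j b, X j))))
          + (\<Sum>j<n. frag_of (\<Theta> j a, X j) - frag_of (\<Theta> j a - \<Theta> j b, X j) - frag_of (\<Theta> j b, X j))"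
      by (simp only:) (simp add: sum_subtractf sum.distrib algebra_simps)
    have "(a - b) - (\<Sum>j<n. frag_of (\<Theta> j (a - b), X j)) \<in> ?T"
      unfolding E by (rule rel)
    then show ?case using ka kb keys_diff[of a b] by blast
  qed
  then show ?thesis unfolding \<Theta>_def by blast
qed

section \<open>Finite groups of coefficient automorphisms commuting with the twist\<close>

lemma smult_sum_right: "smult c (sum f A) = (\<Sum>i\<in>A. smult c (f i))"
  by (induction A rule: infinite_finite_induct) (auto simp: smult_add_right)

locale twisted_galois =
  fixes s :: "'a::field \<Rightarrow> 'a" and H :: "('a \<Rightarrow> 'a) set"
  assumes twist_aut: "field_aut s"
    and finite_H: "finite H"
    and H_aut: "h \<in> H \<Longrightarrow> field_aut h"
    and H_commute: "h \<in> H \<Longrightarrow> h \<circ> s = s \<circ> h"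
    and id_in_H: "id \<in> H"
    and H_comp: "g \<in> H \<Longrightarrow> h \<in> H \<Longrightarrow> g \<circ> h \<in> H"
    and H_inv: "h \<in> H \<Longrightarrow> inv h \<in> H"
    and H_faithful_on_fixed: "g \<in> H \<Longrightarrow> h \<in> H \<Longrightarrow> g \<noteq> h \<Longrightarrow> \<exists>y. s y = y \<and> g y \<noteq> h y"
begin

lemma fixed_mult: "s x = x \<Longrightarrow> s y = y \<Longrightarrow> s (x * y) = x * y"
  and fixed_minus: "s x = x \<Longrightarrow> s (- x) = - x"
  and fixed_diff: "s x = x \<Longrightarrow> s y = y \<Longrightarrow> s (x - y) = x - y"
  and fixed_inverse: "s x = x \<Longrightarrow> s (inverse x) = inverse x"
  and fixed_1: "s 1 = 1"
  by (simp_all add: field_aut_mult field_aut_minus field_aut_diff field_aut_inverse field_aut_1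
      twist_aut)

lemma fixed_H_image: "h \<in> H \<Longrightarrow> s y = y \<Longrightarrow> s (h y) = h y"
  using H_commute[of h] by (metis comp_apply)

definition galois_basis :: "nat \<Rightarrow> (nat \<Rightarrow> 'a) \<Rightarrow> (nat \<Rightarrow> 'a) \<Rightarrow> bool" where
  "galois_basis n xs ys \<longleftrightarrow> (\<forall>i<n. s (xs i) = xs i \<and> s (ys i) = ys i) \<and>
     (\<forall>u\<in>H. (\<Sum>i<n. xs i * u (ys i)) = (if u = id then 1 else 0))"

text \<open>Artin's construction: for each \<open>t \<noteq> id\<close> the pair list \<open>[(d, y), (- d t(y), 1)]\<close> with
  \<open>t(y) \<noteq> y\<close>, \<open>d = 1 / (y - t(y))\<close>, evaluates to \<open>d (u(y) - t(y))\<close>, which is \<open>1\<close> at \<open>id\<close> and \<open>0\<close> at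
  \<open>t\<close>; multiplying such lists handles all of \<open>H - {id}\<close>.\<close>

lemma galois_basis_exists: "\<exists>n xs ys. galois_basis n xs ys"
proof -
  define ev where "ev u L = (\<Sum>(x, y)\<leftarrow>L. x * u y)" for u :: "'a \<Rightarrow> 'a" and L
  have "\<exists>L. (\<forall>(x, y)\<in>set L. s x = x \<and> s y = y) \<and> ev id L = 1 \<and> (\<forall>u\<in>S. ev u L = 0)"
    if "S \<subseteq> H - {id}" for S
  proof -
    have "finite S" using that finite_H finite_subset by blast
    then show ?thesis using that
    proof (induction S rule: finite_induct)
      case empty
      show ?case by (rule exI[of _ "[(1, 1)]"]) (simp add: ev_def fixed_1)
    next
      case (insert t S)
      then obtain L where L: "\<forall>(x, y)\<in>set L. s x = x \<and> s y = y" "ev id L = 1" "\<forall>u\<in>S. ev u L = 0"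
        by blast
      have t: "t \<in> H" "t \<noteq> id" using insert.prems by auto
      obtain y where y: "s y = y" "y \<noteq> t y" using H_faithful_on_fixed[OF id_in_H t(1)] t(2) by auto
      have ty: "s (t y) = t y" using fixed_H_image[OF t(1) y(1)] .
      define d where "d = inverse (y - t y)"
      have d: "s d = d" unfolding d_def using fixed_inverse fixed_diff y(1) ty by simp
      define step where "step M = concat (map (\<lambda>(a, b). [(a * d, b * y), (- (a * d * t y), b)]) M)"
        for M
      have ev_step: "ev u (step M) = ev u M * (d * (u y - t y))" if "u \<in> H" for u M
        using field_aut_mult[OF H_aut[OF that]]
        by (induction M) (auto simp: ev_def step_def algebra_simps)
      have "\<forall>(x, y)\<in>set (step L). s x = x \<and> s y = y"
        using L(1) y(1) ty d by (auto simp: step_def fixed_mult fixed_minus)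
      moreover have "ev id (step L) = 1"
        using ev_step[OF id_in_H] L(2) y(2) by (simp add: d_def)
      moreover have "\<forall>u\<in>insert t S. ev u (step L) = 0"
        using ev_step L(3) insert.prems by auto
      ultimately show ?case by blast
    qed
  qed
  from this[of "H - {id}"] obtain L where
    L: "\<forall>(x, y)\<in>set L. s x = x \<and> s y = y" "\<forall>u\<in>H. ev u L = (if u = id then 1 else 0)"
    using id_in_H by auto
  have "galois_basis (length L) (\<lambda>i. fst (L ! i)) (\<lambda>i. snd (L ! i))"
    using L nth_mem by (fastforce simp: galois_basis_def ev_def sum_list_sum_nth lessThan_atLeast0
        case_prod_unfold)
  then show ?thesis by blast
qed

abbreviation "Z \<equiv> ring_center UNIV (ore_mult s)"
abbreviation "R \<equiv> coinv Z ore_act H"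

definition trace :: "'a poly \<Rightarrow> 'a poly" where
  "trace z = (\<Sum>h\<in>H. map_poly h z)"

lemma H_0: "h \<in> H \<Longrightarrow> h 0 = 0"
  using field_aut_0[OF H_aut] .

lemma coeff_map_poly_H: "h \<in> H \<Longrightarrow> coeff (map_poly h p) n = h (coeff p n)"
  by (simp add: coeff_map_poly H_0)

lemma map_poly_ore_mult_H:
  "h \<in> H \<Longrightarrow> map_poly h (ore_mult s p q) = ore_mult s (map_poly h p) (map_poly h q)"
  by (rule map_poly_ore_mult[OF twist_aut H_aut H_commute])

lemma map_poly_comp_H: "g \<in> H \<Longrightarrow> h \<in> H \<Longrightarrow> map_poly g (map_poly h p) = map_poly (g \<circ> h) p"
  by (simp add: map_poly_map_poly H_0)

lemma map_poly_inv_cancel: "h \<in> H \<Longrightarrow> map_poly h (map_poly (inv h) p) = p"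
  using map_poly_comp_H[OF _ H_inv] field_aut_surj[OF H_aut] by (simp add: surj_iff)

lemma in_center_iff: "z \<in> Z \<longleftrightarrow> (\<forall>c. ore_mult s z c = ore_mult s c z)"
  by (simp add: ring_center_def)

lemma center_0: "0 \<in> Z"
  and center_add: "a \<in> Z \<Longrightarrow> b \<in> Z \<Longrightarrow> a + b \<in> Z"
  by (simp_all add: in_center_iff ore_mult_0_left ore_mult_0_right ore_mult_add_left
      ore_mult_add_right twist_aut)

lemma center_sum: "(\<And>i. i \<in> A \<Longrightarrow> f i \<in> Z) \<Longrightarrow> sum f A \<in> Z"
  by (induction A rule: infinite_finite_induct) (auto simp: center_0 center_add)

lemma center_smult: "s c = c \<Longrightarrow> a \<in> Z \<Longrightarrow> smult c a \<in> Z"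
  by (simp add: in_center_iff ore_mult_smult_left ore_mult_smult_right twist_aut)

lemma center_const: "s c = c \<Longrightarrow> [:c:] \<in> Z"
  by (simp add: in_center_iff ore_mult_const_left ore_mult_const_right twist_aut)

lemma center_uminus: "a \<in> Z \<Longrightarrow> - a \<in> Z"
  using center_smult[of "- 1" a] fixed_1 fixed_minus by simp

lemma center_ore_mult: "a \<in> Z \<Longrightarrow> b \<in> Z \<Longrightarrow> ore_mult s a b \<in> Z"
  unfolding in_center_iff by (metis ore_mult_assoc[OF twist_aut])

lemma center_map_poly: "a \<in> Z \<Longrightarrow> h \<in> H \<Longrightarrow> map_poly h a \<in> Z"
  unfolding in_center_iff
proof
  fix c assume a: "\<forall>c. ore_mult s a c = ore_mult s c a" and h: "h \<in> H"
  let ?c' = "map_poly (inv h) c"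
  have "ore_mult s (map_poly h a) c = ore_mult s (map_poly h a) (map_poly h ?c')"
    by (simp only: map_poly_inv_cancel[OF h])
  also have "\<dots> = map_poly h (ore_mult s a ?c')" by (simp add: map_poly_ore_mult_H[OF h])
  also have "\<dots> = map_poly h (ore_mult s ?c' a)" using a by simp
  also have "\<dots> = ore_mult s c (map_poly h a)"
    by (simp add: map_poly_ore_mult_H[OF h] map_poly_inv_cancel[OF h])
  finally show "ore_mult s (map_poly h a) c = ore_mult s c (map_poly h a)" .
qed

lemma coinv_in_center: "r \<in> R \<Longrightarrow> r \<in> Z"
  and map_poly_coinv: "r \<in> R \<Longrightarrow> h \<in> H \<Longrightarrow> map_poly h r = r"
  by (simp_all add: coinv_def ore_act_def)

lemma map_poly_sum_H: "h \<in> H \<Longrightarrow> map_poly h (sum f A) = (\<Sum>i\<in>A. map_poly h (f i))"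
  by (simp add: poly_eq_iff coeff_map_poly_H coeff_sum field_aut_sum[OF H_aut])

lemma coeff_trace: "coeff (trace p) n = (\<Sum>h\<in>H. h (coeff p n))"
  by (simp add: trace_def coeff_sum coeff_map_poly_H)

lemma trace_add: "trace (a + b) = trace a + trace b"
  by (simp add: poly_eq_iff coeff_trace field_aut_add[OF H_aut] sum.distrib)

lemma map_poly_trace: "g \<in> H \<Longrightarrow> map_poly g (trace z) = trace z"
proof -
  assume g: "g \<in> H"
  have "map_poly g (trace z) = (\<Sum>h\<in>H. map_poly (g \<circ> h) z)"
    unfolding trace_def by (simp add: map_poly_sum_H[OF g] map_poly_comp_H[OF g])
  also have "\<dots> = (\<Sum>h\<in>(\<lambda>h. g \<circ> h) ` H. map_poly h z)"
  proof -
    have "inj_on (\<lambda>h. g \<circ> h) H"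
      using field_aut_inj[OF H_aut[OF g]] by (auto intro!: inj_onI simp: fun_eq_iff inj_eq)
    then show ?thesis by (simp add: sum.reindex)
  qed
  also have "(\<lambda>h. g \<circ> h) ` H = H"
  proof
    show "(\<lambda>h. g \<circ> h) ` H \<subseteq> H" using H_comp[OF g] by auto
    show "H \<subseteq> (\<lambda>h. g \<circ> h) ` H"
    proof
      fix h assume "h \<in> H"
      moreover have "g \<circ> (inv g \<circ> h) = h"
        using field_aut_surj[OF H_aut[OF g]] by (simp add: surj_iff o_assoc)
      ultimately show "h \<in> (\<lambda>h. g \<circ> h) ` H" using H_comp[OF H_inv[OF g]] by (metis image_eqI)
    qed
  qed
  finally show ?thesis by (simp add: trace_def)
qed

lemma trace_in_coinv: "z \<in> Z \<Longrightarrow> trace z \<in> R"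
  by (simp add: coinv_def ore_act_def trace_def map_poly_trace[unfolded trace_def]
      center_sum center_map_poly)

lemma trace_ore_mult_coinv: "r \<in> R \<Longrightarrow> trace (ore_mult s r z) = ore_mult s r (trace z)"
  by (simp add: trace_def map_poly_ore_mult_H map_poly_coinv ore_mult_sum_right[OF twist_aut])

lemma trace_coord_in_coinv: "z \<in> Z \<Longrightarrow> s y = y \<Longrightarrow> trace (smult y z) \<in> R"
  using trace_in_coinv center_smult by blast

lemma center_decomposition:
  assumes "galois_basis n xs ys"
  shows "(\<Sum>i<n. smult (xs i) (trace (smult (ys i) z))) = z"
proof (rule poly_eqI)
  fix k
  have "coeff (\<Sum>i<n. smult (xs i) (trace (smult (ys i) z))) k
      = (\<Sum>i<n. \<Sum>h\<in>H. xs i * h (ys i) * h (coeff z k))"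
    by (simp add: coeff_sum coeff_trace sum_distrib_left field_aut_mult[OF H_aut] mult.assoc)
  also have "\<dots> = (\<Sum>h\<in>H. (\<Sum>i<n. xs i * h (ys i)) * h (coeff z k))"
    by (simp add: sum.swap[of _ "{..<n}"] sum_distrib_right)
  also have "\<dots> = (\<Sum>h\<in>H. if h = id then coeff z k else 0)"
    using assms by (intro sum.cong) (auto simp: galois_basis_def)
  also have "\<dots> = coeff z k" using id_in_H finite_H by simp
  finally show "coeff (\<Sum>i<n. smult (xs i) (trace (smult (ys i) z))) k = coeff z k" .
qed

lemma trace_one: "\<exists>u. s u = u \<and> trace [:u:] = 1"
proof -
  obtain n xs ys where basis: "galois_basis n xs ys" using galois_basis_exists by blast
  have "(\<Sum>j<n. xs j * (\<Sum>h\<in>H. h (ys j))) = (\<Sum>h\<in>H. \<Sum>j<n. xs j * h (ys j))"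
    by (simp add: sum_distrib_left sum.swap[of _ "{..<n}"])
  also have "\<dots> = (\<Sum>h\<in>H. if h = id then 1 else 0)"
    using basis by (intro sum.cong) (auto simp: galois_basis_def)
  also have "\<dots> = 1" using id_in_H finite_H by simp
  finally have "\<exists>j<n. (\<Sum>h\<in>H. h (ys j)) \<noteq> 0"
    by (metis (no_types, lifting) lessThan_iff mult_zero_right sum.neutral zero_neq_one)
  then obtain j where j: "j < n" and k: "(\<Sum>h\<in>H. h (ys j)) \<noteq> 0" by blast
  define y where "y = ys j"
  define k where "k = (\<Sum>h\<in>H. h y)"
  have y: "s y = y" using basis j by (simp add: galois_basis_def y_def)
  \<comment> \<open>\<open>k\<close> is the constant coefficient of the \<open>H\<close>-invariant polynomial \<open>trace [:y:]\<close>\<close>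
  have hk: "h k = k" if "h \<in> H" for h
    using arg_cong[OF map_poly_trace[OF that, of "[:y:]"], of "\<lambda>p. coeff p 0"]
    by (simp add: coeff_map_poly_H[OF that] coeff_trace k_def)
  have sk: "s k = k" unfolding k_def by (simp add: field_aut_sum[OF twist_aut] fixed_H_image[OF _ y])
  define u where "u = y * inverse k"
  have "trace [:u:] = 1"
  proof (rule poly_eqI)
    fix i
    have "(\<Sum>h\<in>H. h (y * inverse k)) = (\<Sum>h\<in>H. h y * inverse k)"
      by (intro sum.cong refl) (simp add: field_aut_mult[OF H_aut] field_aut_inverse[OF H_aut] hk)
    also have "\<dots> = k * inverse k" by (simp add: k_def sum_distrib_right)
    finally have "(\<Sum>h\<in>H. h (y * inverse k)) = k * inverse k" .
    then show "coeff (trace [:u:]) i = coeff 1 i"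
      using k by (simp add: coeff_trace coeff_const H_0 u_def k_def y_def)
  qed
  moreover have "s u = u" unfolding u_def using fixed_mult fixed_inverse y sk by simp
  ultimately show ?thesis by blast
qed

end

lemma frag_eval_cong:
  "(\<And>p. p \<in> Poly_Mapping.keys t \<Longrightarrow> g p = g' p) \<Longrightarrow> frag_eval g t = frag_eval g' t"
  by (simp add: frag_eval_def)

lemma frag_eval_tmap: "frag_eval g (tmap f t) = frag_eval (\<lambda>p. g (f (fst p), snd p)) t"
  by (simp add: tmap_def frag_eval_sum) (simp add: frag_eval_def)

lemma galois_map_eq_frag_eval:
  "galois_map mul act t h = frag_eval (\<lambda>p. mul (fst p) (act h (snd p))) t"
  by (simp add: galois_map_def frag_eval_def int_mult_eq_of_int_mult)

context twisted_galois
begin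

lemma map_poly_const_H: "h \<in> H \<Longrightarrow> map_poly h [:c:] = [:h c:]"
  by (simp add: poly_eq_iff coeff_map_poly_H coeff_const H_0)

lemma comp_inv_eq_id_iff: "g \<in> H \<Longrightarrow> h \<circ> inv g = id \<longleftrightarrow> h = g"
proof
  assume g: "g \<in> H" and "h \<circ> inv g = id"
  have "inv g \<circ> g = id" using field_aut_inj[OF H_aut[OF g]] by (simp add: inj_iff)
  then have "h = (h \<circ> inv g) \<circ> g" by (simp add: o_assoc[symmetric])
  then show "h = g" using \<open>h \<circ> inv g = id\<close> by simp
qed (use field_aut_surj[OF H_aut] in \<open>simp add: surj_iff\<close>)

lemma map_poly_smult_H: "h \<in> H \<Longrightarrow> map_poly h (smult c p) = smult (h c) (map_poly h p)"
  by (simp add: poly_eq_iff coeff_map_poly_H field_aut_mult[OF H_aut])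

lemma tensor_rel_of_trace_coords_vanish:
  fixes Lc :: "'l::ab_group_add set"
  assumes basis: "galois_basis n xs ys"
    and L0: "0 \<in> Lc" and Ladd: "\<And>a b. a \<in> Lc \<Longrightarrow> b \<in> Lc \<Longrightarrow> a + b \<in> Lc"
    and Lminus: "\<And>a. a \<in> Lc \<Longrightarrow> - a \<in> Lc"
    and Lract: "\<And>m r. m \<in> Lc \<Longrightarrow> r \<in> R \<Longrightarrow> ract m r \<in> Lc"
    and keys: "Poly_Mapping.keys t \<subseteq> Lc \<times> Z"
    and vanish: "\<And>j. j < n \<Longrightarrow> frag_eval (\<lambda>p. ract (fst p) (trace (smult (ys j) (snd p)))) t = 0"
  shows "t \<in> tensor_rel Lc ract Z R (ore_mult s)"
proof -
  let ?T = "tensor_rel Lc ract Z R (ore_mult s)"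
  have fixed: "s (xs j) = xs j" "s (ys j) = ys j" if "j < n" for j
    using basis that by (auto simp: galois_basis_def)
  have times_const: "ore_mult s (trace (smult (ys j) z)) [:xs j:] = smult (xs j) (trace (smult (ys j) z))"
    if "j < n" for j z
    using ore_mult_const_right[OF twist_aut fixed(1)[OF that]] .
  have "t - (\<Sum>j<n. frag_of (frag_eval (\<lambda>p. ract (fst p) (trace (smult (ys j) (snd p)))) t, [:xs j:]))
      \<in> ?T"
  proof (rule tensor_rel_decompose[where \<mu> = "\<lambda>j z. trace (smult (ys j) z)"])
    show "\<And>j. j < n \<Longrightarrow> [:xs j:] \<in> Z" using center_const fixed by blast
    show "\<And>j z. j < n \<Longrightarrow> z \<in> Z \<Longrightarrow> trace (smult (ys j) z) \<in> R"
      using trace_coord_in_coinv fixed by blast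
    show "\<And>j z. j < n \<Longrightarrow> z \<in> Z \<Longrightarrow> ore_mult s (trace (smult (ys j) z)) [:xs j:] \<in> Z"
      using times_const center_smult trace_coord_in_coinv coinv_in_center fixed by metis
    show "\<And>z. z \<in> Z \<Longrightarrow> z = (\<Sum>j<n. ore_mult s (trace (smult (ys j) z)) [:xs j:])"
      using times_const center_decomposition[OF basis] by simp
  qed (use L0 Ladd Lminus Lract keys center_0 center_add in auto)
  moreover have "(\<Sum>j<n. frag_of (frag_eval (\<lambda>p. ract (fst p) (trace (smult (ys j) (snd p)))) t,
      [:xs j:])) \<in> ?T"
    using vanish fixed by (intro tensor_rel_sum) (simp add: tensor_rel_zero_left L0 center_const)
  ultimately show ?thesis using tensor_rel.plus by fastforce
qed

text \<open>For an \<open>R\<close>-module \<open>M\<close> and \<open>y\<close> fixed by \<open>s\<close>, \<open>m \<otimes> z \<mapsto> trace (y z) \<cdot> m\<close> is well defined on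
  \<open>M \<otimes>\<^sub>R Z\<close>.\<close>

lemma frag_eval_trace_coord_tensor_rel:
  assumes module: "rmodule R (ore_mult s) sm" and y: "s y = y"
    and t: "t \<in> tensor_rel UNIV (\<lambda>m r. sm r m) Z R (ore_mult s)"
  shows "frag_eval (\<lambda>p. sm (trace (smult y (snd p))) (fst p)) t = 0"
  using t
proof (rule frag_eval_tensor_rel)
  have add: "\<And>r m n. r \<in> R \<Longrightarrow> sm r (m + n) = sm r m + sm r n"
    and add_scalar: "\<And>r q m. r \<in> R \<Longrightarrow> q \<in> R \<Longrightarrow> sm (r + q) m = sm r m + sm q m"
    and mult: "\<And>r q m. r \<in> R \<Longrightarrow> q \<in> R \<Longrightarrow> sm (ore_mult s r q) m = sm r (sm q m)"
    using module unfolding rmodule_def by blast+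
  show "sm (trace (smult y (snd (m + m', z)))) (fst (m + m', z))
      = sm (trace (smult y (snd (m, z)))) (fst (m, z)) + sm (trace (smult y (snd (m', z)))) (fst (m', z))"
    if "z \<in> Z" for m m' z
    using add trace_coord_in_coinv[OF that y] by simp
  show "sm (trace (smult y (snd (m, z + z')))) (fst (m, z + z'))
      = sm (trace (smult y (snd (m, z)))) (fst (m, z)) + sm (trace (smult y (snd (m, z')))) (fst (m, z'))"
    if "z \<in> Z" "z' \<in> Z" for m z z'
    using add_scalar trace_coord_in_coinv[OF _ y] that by (simp add: smult_add_right trace_add)
  show "sm (trace (smult y (snd (sm r m, z)))) (fst (sm r m, z))
      = sm (trace (smult y (snd (m, ore_mult s r z)))) (fst (m, ore_mult s r z))"
    if r: "r \<in> R" and z: "z \<in> Z" for m r z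
  proof -
    have coord: "trace (smult y z) \<in> R" using trace_coord_in_coinv[OF z y] .
    have "trace (smult y (ore_mult s r z)) = ore_mult s r (trace (smult y z))"
      by (simp add: ore_mult_smult_right[OF twist_aut y, symmetric] trace_ore_mult_coinv[OF r])
    also have "\<dots> = ore_mult s (trace (smult y z)) r"
      using coord coinv_in_center by (simp add: in_center_iff)
    finally show ?thesis using mult[OF coord r] by simp
  qed
qed

lemma flat_center: "flat_over R Z (ore_mult s) TYPE('m::ab_group_add) TYPE('n::ab_group_add)"
  unfolding flat_over_def
proof (intro allI impI, elim conjE)
  fix sm :: "'a poly \<Rightarrow> 'm \<Rightarrow> 'm" and sn :: "'a poly \<Rightarrow> 'n \<Rightarrow> 'n" and f t
  assume "rmodule R (ore_mult s) sm" and module_N: "rmodule R (ore_mult s) sn"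
    and lin: "rlinear R sm sn f" and "inj f"
    and keys: "Poly_Mapping.keys t \<subseteq> UNIV \<times> Z"
    and rel_N: "tmap f t \<in> tensor_rel UNIV (\<lambda>n r. sn r n) Z R (ore_mult s)"
  obtain n xs ys where basis: "galois_basis n xs ys" using galois_basis_exists by blast
  have f_add: "\<And>a b. f (a + b) = f a + f b" and f_scalar: "\<And>r m. r \<in> R \<Longrightarrow> f (sm r m) = sn r (f m)"
    using lin unfolding rlinear_def by blast+
  have f0: "f 0 = 0" using f_add[of 0 0] by (metis add_cancel_right_right)
  show "t \<in> tensor_rel UNIV (\<lambda>m r. sm r m) Z R (ore_mult s)"
  proof (rule tensor_rel_of_trace_coords_vanish[OF basis _ _ _ _ keys])
    fix j assume "j < n"
    then have y: "s (ys j) = ys j" using basis by (simp add: galois_basis_def)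
    have "f (frag_eval (\<lambda>p. sm (trace (smult (ys j) (snd p))) (fst p)) t)
        = frag_eval (\<lambda>p. sn (trace (smult (ys j) (snd p))) (f (fst p))) t"
      unfolding additive_frag_eval[OF f_add]
      using keys f_scalar trace_coord_in_coinv[OF _ y] by (intro frag_eval_cong) auto
    also have "\<dots> = 0"
      using frag_eval_trace_coord_tensor_rel[OF module_N y rel_N] by (simp add: frag_eval_tmap)
    finally show "frag_eval (\<lambda>p. sm (trace (smult (ys j) (snd p))) (fst p)) t = 0"
      using \<open>inj f\<close> f0 by (metis injD)
  qed auto
qed

text \<open>The trace coordinate of \<open>m \<otimes> 1\<close> is \<open>trace u \<cdot> m = m\<close> for \<open>u\<close> as in \<open>trace_one\<close>.\<close>

lemma faithfully_flat_center:
  "faithfully_flat_over R Z (ore_mult s) TYPE('m::ab_group_add) TYPE('n::ab_group_add)"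
  unfolding faithfully_flat_over_def
proof (intro conjI flat_center allI impI, elim conjE)
  fix sm :: "'a poly \<Rightarrow> 'm \<Rightarrow> 'm" and m :: 'm
  assume module: "rmodule R (ore_mult s) sm"
    and "\<forall>m z. z \<in> Z \<longrightarrow> Poly_Mapping.single (m, z) 1 \<in> tensor_rel UNIV (\<lambda>m r. sm r m) Z R (ore_mult s)"
  then have rel: "frag_of (m, 1) \<in> tensor_rel UNIV (\<lambda>m r. sm r m) Z R (ore_mult s)"
    using center_const[OF fixed_1] by (simp add: one_pCons)
  obtain u where u: "s u = u" "trace [:u:] = 1" using trace_one by blast
  have "sm 1 m = m" using module unfolding rmodule_def by blast
  then show "m = 0"
    using frag_eval_trace_coord_tensor_rel[OF module u(1) rel] u(2) by simp
qed

lemma galois_map_surjective: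
  assumes f: "\<forall>h\<in>H. f h \<in> Z"
  shows "\<exists>t. Poly_Mapping.keys t \<subseteq> Z \<times> Z \<and> (\<forall>h\<in>H. galois_map (ore_mult s) ore_act t h = f h)"
proof -
  obtain n xs ys where basis: "galois_basis n xs ys" using galois_basis_exists by blast
  then have fixed: "s (xs j) = xs j" "s (ys j) = ys j" if "j < n" for j
    using that by (auto simp: galois_basis_def)
  define t where "t = (\<Sum>g\<in>H. \<Sum>j<n. frag_of (smult (xs j) (f g), [:inv g (ys j):]))"
  have "Poly_Mapping.keys t \<subseteq> Z \<times> Z"
    unfolding t_def using fixed f center_smult center_const fixed_H_image[OF H_inv]
    by (intro keys_sum_subset) (auto simp: keys_frag_of)
  moreover have "galois_map (ore_mult s) ore_act t h = f h" if h: "h \<in> H" for h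
  proof -
    have "galois_map (ore_mult s) ore_act t h
        = (\<Sum>g\<in>H. smult (\<Sum>j<n. xs j * (h \<circ> inv g) (ys j)) (f g))"
    proof -
      have "ore_mult s (smult (xs j) (f g)) [:h (inv g (ys j)):] = smult (xs j * h (inv g (ys j))) (f g)"
        if "g \<in> H" "j < n" for g j
        using that fixed_H_image[OF h fixed_H_image[OF H_inv]] fixed
        by (simp add: ore_mult_const_right[OF twist_aut] mult.commute)
      then show ?thesis
        by (simp add: galois_map_eq_frag_eval t_def frag_eval_sum ore_act_def map_poly_const_H[OF h]
            smult_sum)
    qed
    also have "\<dots> = (\<Sum>g\<in>H. if g = h then f g else 0)"
    proof (intro sum.cong refl)
      fix g assume g: "g \<in> H"
      have "(\<Sum>j<n. xs j * (h \<circ> inv g) (ys j)) = (if h \<circ> inv g = id then 1 else 0)"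
        using basis H_comp[OF h H_inv[OF g]] unfolding galois_basis_def by blast
      then show "smult (\<Sum>j<n. xs j * (h \<circ> inv g) (ys j)) (f g) = (if g = h then f g else 0)"
        using comp_inv_eq_id_iff[OF g] by auto
    qed
    also have "\<dots> = f h" using h finite_H by simp
    finally show ?thesis .
  qed
  ultimately show ?thesis by blast
qed

lemma galois_map_injective:
  assumes keys: "Poly_Mapping.keys t \<subseteq> Z \<times> Z"
    and zero: "\<forall>h\<in>H. galois_map (ore_mult s) ore_act t h = 0"
  shows "t \<in> tensor_rel Z (\<lambda>c r. ore_mult s c r) Z R (ore_mult s)"
proof -
  obtain n xs ys where basis: "galois_basis n xs ys" using galois_basis_exists by blast
  show ?thesis
  proof (rule tensor_rel_of_trace_coords_vanish[OF basis _ _ _ _ keys])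
    fix j assume "j < n"
    then have y: "h \<in> H \<Longrightarrow> s (h (ys j)) = h (ys j)" for h
      using basis fixed_H_image by (auto simp: galois_basis_def)
    \<comment> \<open>the trace coordinate is the combination \<open>\<Sum>h. h(y) \<cdot> galois_map t h\<close> of the values of
       the Galois map\<close>
    have "frag_eval (\<lambda>p. ore_mult s (fst p) (trace (smult (ys j) (snd p)))) t
        = (\<Sum>p\<in>Poly_Mapping.keys t. of_int (Poly_Mapping.lookup t p) *
             (\<Sum>h\<in>H. smult (h (ys j)) (ore_mult s (fst p) (map_poly h (snd p)))))"
      unfolding frag_eval_def int_mult_eq_of_int_mult
      by (intro sum.cong refl) (simp add: trace_def ore_mult_sum_right[OF twist_aut] map_poly_smult_H
          ore_mult_smult_right[OF twist_aut] y)
    also have "\<dots> = (\<Sum>h\<in>H. smult (h (ys j)) (galois_map (ore_mult s) ore_act t h))"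
      by (simp add: galois_map_def ore_act_def sum_distrib_left smult_sum_right sum.swap[of _ H])
    also have "\<dots> = 0" using zero by simp
    finally show "frag_eval (\<lambda>p. ore_mult s (fst p) (trace (smult (ys j) (snd p)))) t = 0" .
  qed (use center_0 center_add center_uminus center_ore_mult coinv_in_center in auto)
qed

theorem centrally_galois_coinv:
  "centrally_galois (coinv UNIV ore_act H) UNIV (ore_mult s) ore_act H
     TYPE('m::ab_group_add) TYPE('n::ab_group_add)"
  unfolding centrally_galois_def hopf_galois_def subcomodule_def
  using center_map_poly galois_map_surjective galois_map_injective faithfully_flat_center
  by (auto simp: ore_act_def)

end

section \<open>The Galois setting\<close>

text \<open>If \<open>g\<close> and \<open>h\<close> agreed on the fixed field of \<open>\<sigma> \<in> N\<close>, they would agree on all orbit sums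
  \<open>\<Sum>n\<in>N. n z\<close>, which is a nontrivial linear relation between the characters of \<open>gN \<union> hN\<close>.\<close>

lemma separated_by_twist_fixed:
  fixes \<sigma> g h :: "'a::field \<Rightarrow> 'a"
  assumes "finite N" and N_aut: "\<And>n. n \<in> N \<Longrightarrow> field_aut n" and "id \<in> N"
    and \<sigma>: "field_aut \<sigma>" and \<sigma>N: "(\<lambda>n. \<sigma> \<circ> n) ` N = N"
    and g: "field_aut g" and h: "field_aut h"
    and disjoint: "(\<lambda>n. g \<circ> n) ` N \<inter> (\<lambda>n. h \<circ> n) ` N = {}"
  shows "\<exists>y. \<sigma> y = y \<and> g y \<noteq> h y"
proof (rule ccontr)
  assume "\<not> (\<exists>y. \<sigma> y = y \<and> g y \<noteq> h y)"
  then have agree: "\<And>y. \<sigma> y = y \<Longrightarrow> g y = h y" by blast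
  define A where "A = (\<lambda>n. g \<circ> n) ` N"
  define B where "B = (\<lambda>n. h \<circ> n) ` N"
  have orbit_sum_fixed: "\<sigma> (\<Sum>n\<in>N. n z) = (\<Sum>n\<in>N. n z)" for z
  proof -
    have "\<sigma> (\<Sum>n\<in>N. n z) = (\<Sum>\<chi>\<in>(\<lambda>n. \<sigma> \<circ> n) ` N. \<chi> z)"
      by (simp add: field_aut_sum[OF \<sigma>] sum_comp_left_image[OF field_aut_inj[OF \<sigma>]])
    then show ?thesis by (simp only: \<sigma>N)
  qed
  define c where "c \<chi> = (if \<chi> \<in> A then (1::'a) else - 1)" for \<chi>
  have fin: "finite A" "finite B" using \<open>finite N\<close> by (simp_all add: A_def B_def)
  have "\<chi> \<in> A \<union> B \<Longrightarrow> field_aut \<chi>" for \<chi>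
    unfolding A_def B_def using field_aut_comp g h N_aut by blast
  then have mult: "\<forall>\<chi>\<in>A \<union> B. \<forall>x y. \<chi> (x * y) = \<chi> x * \<chi> y" "\<forall>\<chi>\<in>A \<union> B. \<chi> 1 = 1"
    using field_aut_mult field_aut_1 by blast+
  have "\<forall>z. (\<Sum>\<chi>\<in>A \<union> B. c \<chi> * \<chi> z) = 0"
  proof
    fix z
    have "(\<Sum>\<chi>\<in>A \<union> B. c \<chi> * \<chi> z) = (\<Sum>\<chi>\<in>A. c \<chi> * \<chi> z) + (\<Sum>\<chi>\<in>B. c \<chi> * \<chi> z)"
      by (rule sum.union_disjoint[OF fin disjoint[folded A_def B_def]])
    also have "\<dots> = (\<Sum>\<chi>\<in>A. \<chi> z) + (\<Sum>\<chi>\<in>B. - \<chi> z)"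
      using disjoint by (intro arg_cong2[where f = "(+)"] sum.cong) (auto simp: c_def A_def B_def)
    also have "\<dots> = (\<Sum>\<chi>\<in>A. \<chi> z) - (\<Sum>\<chi>\<in>B. \<chi> z)" by (simp add: sum_negf)
    also have "\<dots> = g (\<Sum>n\<in>N. n z) - h (\<Sum>n\<in>N. n z)"
      by (simp add: A_def B_def sum_comp_left_image field_aut_inj[OF g] field_aut_inj[OF h]
          field_aut_sum[OF g] field_aut_sum[OF h])
    also have "\<dots> = 0" using agree[OF orbit_sum_fixed] by simp
    finally show "(\<Sum>\<chi>\<in>A \<union> B. c \<chi> * \<chi> z) = 0" .
  qed
  moreover have "g \<in> A" unfolding A_def using \<open>id \<in> N\<close> by (metis comp_id image_eqI)
  ultimately have "c g = 0" using characters_independent[of "A \<union> B"] fin mult by blast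
  then show False using \<open>g \<in> A\<close> by (simp add: c_def)
qed

lemma subgrp_comp_left_image:
  assumes "subgrp N G" "\<sigma> \<in> N" "surj \<sigma>"
  shows "(\<lambda>n. \<sigma> \<circ> n) ` N = N"
proof
  show "(\<lambda>n. \<sigma> \<circ> n) ` N \<subseteq> N" using assms(1,2) by (auto simp: subgrp_def)
  show "N \<subseteq> (\<lambda>n. \<sigma> \<circ> n) ` N"
  proof
    fix n assume "n \<in> N"
    then have "inv \<sigma> \<circ> n \<in> N" using assms(1,2) by (auto simp: subgrp_def)
    moreover have "\<sigma> \<circ> (inv \<sigma> \<circ> n) = n" using assms(3) by (simp add: surj_iff o_assoc)
    ultimately show "n \<in> (\<lambda>n. \<sigma> \<circ> n) ` N" by (intro image_eqI[where x = "inv \<sigma> \<circ> n"]) auto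
  qed
qed

lemma cosets_disjoint:
  assumes "subgrp H G" "subgrp N G" "N \<inter> H = {id}" "\<And>x. x \<in> G \<Longrightarrow> bij x"
    and "g \<in> H" "h \<in> H" "g \<noteq> h"
  shows "(\<lambda>n. g \<circ> n) ` N \<inter> (\<lambda>n. h \<circ> n) ` N = {}"
proof (rule ccontr)
  assume "(\<lambda>n. g \<circ> n) ` N \<inter> (\<lambda>n. h \<circ> n) ` N \<noteq> {}"
  then obtain n1 n2 where n: "n1 \<in> N" "n2 \<in> N" and eq: "g \<circ> n1 = h \<circ> n2" by blast
  have bij: "bij h" "bij n1" using assms(1,2,4,6) n by (auto simp: subgrp_def)
  have inv_h: "inv h \<circ> h = id" "h \<circ> inv h = id"
    using bij(1) by (simp_all add: bij_is_inj bij_is_surj flip: surj_iff)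
  have inv_n1: "n1 \<circ> inv n1 = id" using bij_is_surj[OF bij(2)] by (simp add: surj_iff)
  have "inv h \<circ> g \<circ> n1 = (inv h \<circ> h) \<circ> n2" by (simp add: comp_assoc eq)
  then have "inv h \<circ> g \<circ> n1 = n2" using inv_h(1) by simp
  from arg_cong[OF this, of "\<lambda>f. f \<circ> inv n1"] have "inv h \<circ> g = n2 \<circ> inv n1"
    using inv_n1 by (simp add: comp_assoc)
  moreover have "inv h \<circ> g \<in> H" "n2 \<circ> inv n1 \<in> N"
    using assms(1,2,5,6) n by (auto simp: subgrp_def)
  ultimately have "inv h \<circ> g = id" using assms(3) by auto
  from arg_cong[OF this, of "\<lambda>f. h \<circ> f"] have "g = h"
    using inv_h(2) by (simp add: comp_assoc[symmetric])
  then show False using \<open>g \<noteq> h\<close> by simp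
qed

theorem corollary3p18:
  fixes K Kc :: "'a::field set"
    and G H N :: "('a \<Rightarrow> 'a) set"
    and \<sigma> :: "'a \<Rightarrow> 'a"
    and B :: "'a set"
  assumes "subfield K" and "subfield Kc" and "K \<subseteq> Kc"
    and "finite_ext Kc" and "separable_ext Kc" and "normal_ext Kc"
    and "G = galois_group Kc"
    and "subgrp H G" and "subgrp N G"
    and "G = {n \<circ> h | n h. n \<in> N \<and> h \<in> H}"
    and "N \<inter> H = {id}"
    and "N = cyclic_gen \<sigma>"
    and "\<forall>g\<in>G. \<sigma> \<circ> g = g \<circ> \<sigma>"
    and "B = fixed_field H"
  shows "centrally_galois (ore_sub B) UNIV (ore_mult \<sigma>) ore_act H
           TYPE('m::ab_group_add) TYPE('n::ab_group_add)"
proof -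
  have aut: "g \<in> G \<Longrightarrow> field_aut g" for g using assms(7) by (simp add: galois_group_def)
  have finite: "finite H" "finite N"
    using finite_galois_group[OF assms(4)] assms(7-9) by (auto simp: subgrp_def intro: finite_subset)
  have HG: "H \<subseteq> G" and NG: "N \<subseteq> G" and "id \<in> N" using assms(8,9) by (auto simp: subgrp_def)
  have "\<sigma> \<in> N" unfolding assms(12) cyclic_gen_def by (intro UnI1 range_eqI[of _ _ 1]) simp
  then have \<sigma>: "field_aut \<sigma>" using aut NG by blast
  interpret twisted_galois \<sigma> H
  proof
    show "\<exists>y. \<sigma> y = y \<and> g y \<noteq> h y" if "g \<in> H" "h \<in> H" "g \<noteq> h" for g h
    proof (rule separated_by_twist_fixed[OF finite(2) _ \<open>id \<in> N\<close> \<sigma>])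
      show "(\<lambda>n. \<sigma> \<circ> n) ` N = N"
        using subgrp_comp_left_image[OF assms(9) \<open>\<sigma> \<in> N\<close> field_aut_surj[OF \<sigma>]] .
      show "(\<lambda>n. g \<circ> n) ` N \<inter> (\<lambda>n. h \<circ> n) ` N = {}"
        using cosets_disjoint[OF assms(8,9,11) _ that] aut field_aut_bij by blast
    qed (use that aut HG NG in auto)
  qed (use assms(8,13) \<sigma> finite aut HG in \<open>auto simp: subgrp_def\<close>)
  have "ore_sub B = coinv UNIV ore_act H"
    by (auto simp: ore_sub_def assms(14) fixed_field_def coinv_def ore_act_def poly_eq_iff
        coeff_map_poly_H)
  then show ?thesis using centrally_galois_coinv by simp
qed

end
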